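(* Let $n\ge2$. Then $\mathcal{S}_n^\downarrow\subset\mathcal{S}_n$.
   Context: Let $\mathcal{C}$ be the set of smooth closed simple strictly convex (positive curvature) curves in $\mathbb{R}^2$, each parametrized by $\theta\in\mathbb{T}=\mathbb{R}/2\pi\mathbb{Z}$ so that the unit tangent at $C(\theta)$ is $(\cos\theta,\sin\theta)$, the outward normal is $\nu(\theta)=(\sin\theta,-\cos\theta)$, and $\rho(\theta)$ is the curvature there. Let $\Delta$ be the vertical axis, and $\mathcal{T}_n$ the set of closed curves symmetric with respect to $\Delta$ and invariant by the rotation of angle $2\pi/n$ about the origin. For $C\in\mathcal{C}\cap\mathcal{T}_n$ and $\theta\in(0,\pi/n]$, let $(0,\Pi(\theta))$ be the intersection point of the normal line to $C$ at $C(\theta)$ with $\Delta$ (with $\Pi(0)$ its limit as $\theta\searrow0$). Define $\mathcal{S}_n=\{C\in\mathcal{C}\cap\mathcal{T}_n:\ \Pi$ is increasing on $[0,\pi/n]\}$ and $\mathcal{S}_n^\downarrow=\{C\in\mathcal{C}\cap\mathcal{T}_n:\ \rho$ is decreasing on $[0,\pi/n]\}$. *)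

theory Defs
  imports "HOL-Analysis.Analysis"
begin

text \<open>The plane is identified with the complex numbers: the point (x,y) is x + i y.
  A curve is given by its tangent-angle parametrization C :: real \<Rightarrow> complex,
  2 pi-periodic in theta.\<close>

definition smooth_real :: "(real \<Rightarrow> real) \<Rightarrow> bool" where
  "smooth_real f \<longleftrightarrow> (\<forall>k x. ((deriv ^^ k) f) differentiable (at x))"

definition smooth_curve :: "(real \<Rightarrow> complex) \<Rightarrow> bool" where
  "smooth_curve C \<longleftrightarrow> smooth_real (\<lambda>t. Re (C t)) \<and> smooth_real (\<lambda>t. Im (C t))"

definition in_class_C :: "(real \<Rightarrow> complex) \<Rightarrow> bool" where
  "in_class_C C \<longleftrightarrow>
     smooth_curve C \<and>
     (\<forall>\<theta>. C (\<theta> + 2 * pi) = C \<theta>) \<and>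
     inj_on C {0..<2 * pi} \<and>
     (\<forall>\<theta>. \<exists>r>0. (C has_vector_derivative (of_real r * cis \<theta>)) (at \<theta>))"

text \<open>Curvature rho(theta): since |C'(theta)| is the radius of curvature, rho = 1/|C'|.\<close>
definition curvature :: "(real \<Rightarrow> complex) \<Rightarrow> real \<Rightarrow> real" where
  "curvature C \<theta> = 1 / norm (vector_derivative C (at \<theta>))"

definition curve_image :: "(real \<Rightarrow> complex) \<Rightarrow> complex set" where
  "curve_image C = C ` {0..2 * pi}"

definition in_T :: "nat \<Rightarrow> (real \<Rightarrow> complex) \<Rightarrow> bool" where
  "in_T n C \<longleftrightarrow>
     (\<lambda>z. - cnj z) ` curve_image C = curve_image C \<and>
     (\<lambda>z. cis (2 * pi / real n) * z) ` curve_image C = curve_image C"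

definition normal_vec :: "real \<Rightarrow> complex" where
  "normal_vec \<theta> = Complex (sin \<theta>) (- cos \<theta>)"

definition normal_axis_pt :: "(real \<Rightarrow> complex) \<Rightarrow> real \<Rightarrow> real" where
  "normal_axis_pt C \<theta> = (THE y. \<exists>t::real. C \<theta> + of_real t * normal_vec \<theta> = Complex 0 y)"

definition Pi_fun :: "(real \<Rightarrow> complex) \<Rightarrow> real \<Rightarrow> real" where
  "Pi_fun C \<theta> = (if \<theta> = 0 then Lim (at_right 0) (normal_axis_pt C) else normal_axis_pt C \<theta>)"

definition S_n :: "nat \<Rightarrow> (real \<Rightarrow> complex) set" where
  "S_n n = {C. in_class_C C \<and> in_T n C \<and>
     (\<forall>x\<in>{0..pi / real n}. \<forall>y\<in>{0..pi / real n}. x \<le> y \<longrightarrow> Pi_fun C x \<le> Pi_fun C y)}"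

definition S_n_down :: "nat \<Rightarrow> (real \<Rightarrow> complex) set" where
  "S_n_down n = {C. in_class_C C \<and> in_T n C \<and>
     (\<forall>x\<in>{0..pi / real n}. \<forall>y\<in>{0..pi / real n}. x \<le> y \<longrightarrow> curvature C y \<le> curvature C x)}"

end

theory Submission
  imports Defs
begin

(* Write R = 1/rho for the radius of curvature, so C' = R e^(i theta) and X = Re C, Y = Im C satisfy
   X' = R cos, Y' = R sin.  Y is strictly smallest at theta = 0, so the reflection symmetry puts
   C(0) on the axis: X(0) = 0.  For theta in (0, pi/2] the normal meets the axis at
   Pi = Y + X cos/sin, with Pi' = (R sin - X)/sin^2.  If rho decreases, R increases, and
   X(theta) = integral of R cos over [0, theta] is at most R(theta) sin(theta); hence Pi' >= 0.
   Pi(0) is the right limit Y(0) + R(0), which extends the monotonicity to theta = 0. *)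

lemma has_real_derivative_Re:
  "(C has_vector_derivative v) (at t) \<Longrightarrow> ((\<lambda>x. Re (C x)) has_real_derivative Re v) (at t)"
  using bounded_linear.has_vector_derivative[OF bounded_linear_Re]
  by (simp add: has_real_derivative_iff_has_vector_derivative)

lemma has_real_derivative_Im:
  "(C has_vector_derivative v) (at t) \<Longrightarrow> ((\<lambda>x. Im (C x)) has_real_derivative Im v) (at t)"
  using bounded_linear.has_vector_derivative[OF bounded_linear_Im]
  by (simp add: has_real_derivative_iff_has_vector_derivative)

lemma in_class_C_radius_of_curvature:
  assumes "in_class_C C"
  obtains R where "\<And>t. R t > 0" "\<And>t. (C has_vector_derivative of_real (R t) * cis t) (at t)"
  using assms unfolding in_class_C_def by metis

lemma curvature_eq_inverse_radius:
  assumes "R > 0" "(C has_vector_derivative of_real R * cis t) (at t)"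
  shows "curvature C t = 1 / R"
  using assms vector_derivative_at[OF assms(2)] by (simp add: curvature_def norm_mult)

lemma ordinate_strict_min_at_zero:
  fixes Y R :: "real \<Rightarrow> real"
  assumes dY: "\<And>s. (Y has_real_derivative R s * sin s) (at s)" and R: "\<And>s. R s > 0"
    and closed: "Y (2 * pi) = Y 0" and t: "0 < t" "t < 2 * pi"
  shows "Y 0 < Y t"
proof -
  have cont: "continuous_on A Y" for A
    using dY by (meson DERIV_isCont continuous_at_imp_continuous_on)
  have Y_increasing: "Y a < Y b" if "0 \<le> a" "a < b" "b \<le> pi" for a b
  proof (rule DERIV_pos_imp_increasing_open[OF \<open>a < b\<close> _ cont])
    fix x assume "a < x" "x < b"
    then have "R x * sin x > 0" using that R[of x] by (simp add: sin_gt_zero)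
    then show "\<exists>y. (Y has_real_derivative y) (at x) \<and> y > 0" using dY by blast
  qed
  have Y_decreasing: "Y a > Y b" if "pi \<le> a" "a < b" "b \<le> 2 * pi" for a b
  proof (rule DERIV_neg_imp_decreasing_open[OF \<open>a < b\<close> _ cont])
    fix x assume "a < x" "x < b"
    then have "R x * sin x < 0" using that R[of x] by (simp add: mult_pos_neg sin_lt_zero)
    then show "\<exists>y. (Y has_real_derivative y) (at x) \<and> y < 0" using dY by blast
  qed
  show ?thesis
  proof (cases "t \<le> pi")
    case True
    then show ?thesis using Y_increasing t by simp
  next
    case False
    then show ?thesis using Y_decreasing[of t "2 * pi"] t closed by simp
  qed
qed

lemma reflection_symmetric_curve_Re_zero:
  assumes C: "in_class_C C" and sym: "(\<lambda>z. - cnj z) ` curve_image C = curve_image C"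
  shows "Re (C 0) = 0"
proof -
  obtain R where R: "\<And>t. R t > 0" and dC: "\<And>t. (C has_vector_derivative of_real (R t) * cis t) (at t)"
    using in_class_C_radius_of_curvature[OF C] by blast
  have periodic: "C (2 * pi) = C 0"
    using C unfolding in_class_C_def by (metis add_0)
  have "C 0 \<in> curve_image C"
    by (simp add: curve_image_def)
  then have "- cnj (C 0) \<in> curve_image C"
    using sym by blast
  then obtain t where t: "0 \<le> t" "t \<le> 2 * pi" "C t = - cnj (C 0)"
    unfolding curve_image_def by auto
  have "t = 0 \<or> t = 2 * pi"
  proof (rule ccontr)
    assume "\<not> (t = 0 \<or> t = 2 * pi)"
    then have "Im (C 0) < Im (C t)"
      using t R periodic has_real_derivative_Im[OF dC]
      by (intro ordinate_strict_min_at_zero[of "\<lambda>t. Im (C t)" R]) auto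
    then show False using t by simp
  qed
  then have "C t = C 0"
    using t periodic by auto
  then show ?thesis
    using t by (simp add: complex_eq_iff)
qed

lemma normal_axis_pt_eq:
  assumes "sin t \<noteq> 0"
  shows "normal_axis_pt C t = Im (C t) + Re (C t) * cos t / sin t"
  unfolding normal_axis_pt_def
proof (rule the_equality)
  show "\<exists>u::real. C t + of_real u * normal_vec t = Complex 0 (Im (C t) + Re (C t) * cos t / sin t)"
    using assms by (intro exI[of _ "- Re (C t) / sin t"])
      (simp add: complex_eq_iff normal_vec_def field_simps)
next
  fix y assume "\<exists>u::real. C t + of_real u * normal_vec t = Complex 0 y"
  then obtain u where u: "Re (C t) + u * sin t = 0" "Im (C t) - u * cos t = y"
    by (auto simp: complex_eq_iff normal_vec_def)
  then have "u = - Re (C t) / sin t"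
    using assms by (simp add: field_simps)
  then show "y = Im (C t) + Re (C t) * cos t / sin t"
    using u(2) by simp
qed

lemma abscissa_le_radius_sin:
  fixes X R :: "real \<Rightarrow> real"
  assumes X0: "X 0 = 0" and dX: "\<And>s. 0 \<le> s \<Longrightarrow> s \<le> t \<Longrightarrow> (X has_real_derivative R s * cos s) (at s)"
    and R: "mono_on {0..t} R" and t: "0 \<le> t" "t \<le> pi / 2"
  shows "X t \<le> R t * sin t"
proof -
  have "R t * sin 0 - X 0 \<le> R t * sin t - X t"
  proof (rule DERIV_nonneg_imp_nondecreasing[OF t(1)])
    fix s assume s: "0 \<le> s" "s \<le> t"
    have "((\<lambda>s. R t * sin s - X s) has_real_derivative (R t - R s) * cos s) (at s)"
      using dX[OF s] by (auto intro!: derivative_eq_intros simp: algebra_simps)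
    moreover have "0 \<le> (R t - R s) * cos s"
      using s t mono_onD[OF R, of s t] by (auto intro!: mult_nonneg_nonneg cos_ge_zero)
    ultimately show "\<exists>y. ((\<lambda>s. R t * sin s - X s) has_real_derivative y) (at s) \<and> y \<ge> 0"
      by blast
  qed
  then show ?thesis using X0 by simp
qed

lemma has_real_derivative_normal_ordinate:
  fixes X Y :: "real \<Rightarrow> real"
  assumes "(X has_real_derivative r * cos t) (at t)" "(Y has_real_derivative r * sin t) (at t)"
    and "sin t \<noteq> 0"
  shows "((\<lambda>u. Y u + X u * cos u / sin u) has_real_derivative (r * sin t - X t) / (sin t)\<^sup>2) (at t)"
proof -
  have "((\<lambda>u. Y u + X u * cos u / sin u) has_real_derivative
      r * sin t + ((r * cos t * cos t + X t * (- sin t)) * sin t - X t * cos t * cos t) / (sin t * sin t)) (at t)"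
    using assms by (auto intro!: derivative_eq_intros)
  moreover have "r * sin t + ((r * cos t * cos t + X t * (- sin t)) * sin t - X t * cos t * cos t)
      / (sin t * sin t) = (r * sin t - X t) / (sin t)\<^sup>2"
    using assms(3) by (simp add: field_simps power2_eq_square) (insert sin_cos_squared_add[of t], algebra)
  ultimately show ?thesis by simp
qed

lemma normal_ordinate_mono_on:
  fixes X Y R :: "real \<Rightarrow> real"
  assumes dX: "\<And>s. (X has_real_derivative R s * cos s) (at s)"
    and dY: "\<And>s. (Y has_real_derivative R s * sin s) (at s)"
    and X0: "X 0 = 0" and R: "mono_on {0..b} R" and b: "b \<le> pi / 2"
  shows "mono_on {0<..b} (\<lambda>t. Y t + X t * cos t / sin t)"
proof (rule mono_onI)
  fix x y assume x: "x \<in> {0<..b}" and y: "y \<in> {0<..b}" and "x \<le> y"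
  show "Y x + X x * cos x / sin x \<le> Y y + X y * cos y / sin y"
  proof (rule DERIV_nonneg_imp_nondecreasing[OF \<open>x \<le> y\<close>])
    fix s assume s: "x \<le> s" "s \<le> y"
    then have "0 < s" "s \<le> pi / 2" using x y b by auto
    then have "sin s > 0" by (intro sin_gt_zero) auto
    have "X s \<le> R s * sin s"
      using \<open>0 < s\<close> \<open>s \<le> pi / 2\<close> s y mono_on_subset[OF R, of "{0..s}"]
      by (intro abscissa_le_radius_sin[OF X0 dX]) auto
    then have "(R s * sin s - X s) / (sin s)\<^sup>2 \<ge> 0" by simp
    moreover have "((\<lambda>t. Y t + X t * cos t / sin t) has_real_derivative
        (R s * sin s - X s) / (sin s)\<^sup>2) (at s)"
      using \<open>sin s > 0\<close> by (intro has_real_derivative_normal_ordinate dX dY) simp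
    ultimately
    show "\<exists>d. ((\<lambda>t. Y t + X t * cos t / sin t) has_real_derivative d) (at s) \<and> d \<ge> 0"
      by blast
  qed
qed

lemma normal_ordinate_tendsto_zero:
  fixes X Y :: "real \<Rightarrow> real"
  assumes X0: "X 0 = 0" and dX: "(X has_real_derivative r) (at 0)" and Y: "isCont Y 0"
  shows "((\<lambda>t. Y t + X t * cos t / sin t) \<longlongrightarrow> Y 0 + r) (at 0)"
proof -
  have "((\<lambda>t. X t / t) \<longlongrightarrow> r) (at 0)"
    using dX X0 unfolding has_field_derivative_iff by simp
  moreover have "((\<lambda>t::real. sin t / t) \<longlongrightarrow> 1) (at 0)"
    using DERIV_sin[of 0] unfolding has_field_derivative_iff by simp
  ultimately have "((\<lambda>t. Y t + (X t / t) * cos t / (sin t / t)) \<longlongrightarrow> Y 0 + r * cos 0 / 1) (at 0)"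
    using Y by (intro tendsto_intros) (auto simp: isCont_def)
  moreover have "\<forall>\<^sub>F t in at 0. Y t + (X t / t) * cos t / (sin t / t) = Y t + X t * cos t / sin t"
    by (auto simp: eventually_at_filter)
  ultimately show ?thesis
    by (simp add: Lim_transform_eventually)
qed

lemma mono_on_extend_by_right_limit:
  fixes f :: "real \<Rightarrow> 'b::linorder_topology"
  assumes mono: "mono_on {a<..b} f" and lim: "(f \<longlongrightarrow> f a) (at_right a)"
  shows "mono_on {a..b} f"
proof (rule mono_onI)
  fix x y assume x: "x \<in> {a..b}" and y: "y \<in> {a..b}" and "x \<le> y"
  show "f x \<le> f y"
  proof (cases "x = a")
    case True
    show ?thesis
    proof (cases "y = a")
      case False
      then have "a < y" using y by simp
      have "\<forall>\<^sub>F s in at_right a. f s \<le> f y"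
        using eventually_at_right_real[OF \<open>a < y\<close>]
        by eventually_elim (use y in \<open>auto intro!: mono_onD[OF mono]\<close>)
      then show ?thesis
        using True tendsto_upperbound[OF lim _ trivial_limit_at_right_real] by simp
    qed (use True in simp)
  next
    case False
    then show ?thesis
      using x y \<open>x \<le> y\<close> by (intro mono_onD[OF mono]) auto
  qed
qed

lemma Pi_fun_eq_normal_ordinate:
  assumes "0 < t" "t < pi"
  shows "Pi_fun C t = Im (C t) + Re (C t) * cos t / sin t"
  using assms sin_gt_zero[OF assms] by (simp add: Pi_fun_def normal_axis_pt_eq)

lemma Pi_fun_tendsto_at_right_zero:
  assumes X0: "Re (C 0) = 0" and dC: "(C has_vector_derivative of_real r) (at 0)"
  shows "(Pi_fun C \<longlongrightarrow> Pi_fun C 0) (at_right 0)"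
proof -
  have dX: "((\<lambda>t. Re (C t)) has_real_derivative r) (at 0)"
    using has_real_derivative_Re[OF dC] by simp
  have "((\<lambda>t. Im (C t) + Re (C t) * cos t / sin t) \<longlongrightarrow> Im (C 0) + r) (at_right 0)"
    using normal_ordinate_tendsto_zero[OF X0 dX DERIV_isCont[OF has_real_derivative_Im[OF dC]]]
    by (simp add: filterlim_at_split)
  moreover have "\<forall>\<^sub>F t in at_right 0. Im (C t) + Re (C t) * cos t / sin t = normal_axis_pt C t"
    using eventually_at_right_real[OF pi_gt_zero]
    by eventually_elim (metis Pi_fun_def Pi_fun_eq_normal_ordinate greaterThanLessThan_iff less_irrefl)
  ultimately have lim: "(normal_axis_pt C \<longlongrightarrow> Im (C 0) + r) (at_right 0)"
    by (rule Lim_transform_eventually)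
  then have "Pi_fun C 0 = Im (C 0) + r"
    by (simp add: Pi_fun_def tendsto_Lim)
  moreover have "\<forall>\<^sub>F t in at_right 0. normal_axis_pt C t = Pi_fun C t"
    by (simp add: Pi_fun_def eventually_at_filter)
  ultimately show ?thesis
    using lim by (simp add: Lim_transform_eventually)
qed

theorem proposition5p2:
  fixes n :: nat
  assumes "n \<ge> 2"
  shows "S_n_down n \<subseteq> S_n n"
proof
  fix C assume "C \<in> S_n_down n"
  then have C: "in_class_C C" and T: "in_T n C"
    and curvature_decreasing: "\<forall>x\<in>{0..pi / real n}. \<forall>y\<in>{0..pi / real n}. x \<le> y \<longrightarrow> curvature C y \<le> curvature C x"
    unfolding S_n_down_def by auto
  obtain R where R: "\<And>t. R t > 0" and dC: "\<And>t. (C has_vector_derivative of_real (R t) * cis t) (at t)"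
    using in_class_C_radius_of_curvature[OF C] by blast
  define b where "b = pi / real n"
  have b: "b \<le> pi / 2"
    using assms unfolding b_def by (intro divide_left_mono) auto
  have "mono_on {0..b} R"
  proof (rule mono_onI)
    fix x y assume "x \<in> {0..b}" "y \<in> {0..b}" "x \<le> y"
    then have "1 / R y \<le> 1 / R x"
      using curvature_decreasing curvature_eq_inverse_radius[OF R dC] unfolding b_def by simp
    then show "R x \<le> R y"
      using R[of x] R[of y] by (simp add: divide_simps)
  qed
  moreover have "Re (C 0) = 0"
    using reflection_symmetric_curve_Re_zero[OF C] T unfolding in_T_def by blast
  moreover have "\<And>t. ((\<lambda>t. Re (C t)) has_real_derivative R t * cos t) (at t)"
    and "\<And>t. ((\<lambda>t. Im (C t)) has_real_derivative R t * sin t) (at t)"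
    using has_real_derivative_Re[OF dC] has_real_derivative_Im[OF dC] by simp_all
  ultimately have "mono_on {0<..b} (\<lambda>t. Im (C t) + Re (C t) * cos t / sin t)"
    using b by (intro normal_ordinate_mono_on) auto
  then have "mono_on {0<..b} (Pi_fun C)"
    using b pi_gt_zero by (auto simp: mono_on_def Pi_fun_eq_normal_ordinate)
  then have "mono_on {0..b} (Pi_fun C)"
    using dC[of 0] Pi_fun_tendsto_at_right_zero \<open>Re (C 0) = 0\<close>
    by (intro mono_on_extend_by_right_limit) simp_all
  then show "C \<in> S_n n"
    using C T unfolding S_n_def b_def mono_on_def by blast
qed

end
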